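(* Let $\mathcal{P}=\langle P,\le\rangle$ be a finite bounded poset with $|P|\ge 2$. Then there exists $m\in\mathbb{N}$ such that $(R^+_{All})^m(\mathcal{P})$ is graded.
   Context: A poset is bounded if it has a least element $\bot$ and greatest element $\top$. The height $H$ of a finite poset is the number of elements in its largest chain. $a\lessdot b$ denotes covering. A bounded poset with top $\top$ and height $H$ is graded if there is $\rho:P\to\{0,\dots,H-1\}$ with $\rho(\top)=0$ and $\rho(a)=\rho(b)-1$ whenever $a\lessdot b$. For $a\in P$, $\uparrow a=\{b:b\ge a\}$, $\downarrow a=\{b:b\le a\}$ as subposets; the standard interval rank is $R^+(a)=[H(\uparrow a)-1,\;H(\mathcal{P})-H(\downarrow a)]$. Weak order: $[x_*,x^*]\le_W[y_*,y^*]$ iff $x_*\le y_*$ and $x^*\le y^*$. Define $R^+_{All}(\mathcal{P})=\langle P,\le_{R_A}\rangle$ on the same underlying set, where $p<_{R_A}q$ iff $R^+(p)>_W R^+(q)$ (strictly), and $\le_{R_A}$ is the reflexive closure of $<_{R_A}$ (so distinct elements with equal standard interval rank are incomparable). $(R^+_{All})^m$ denotes $m$-fold iteration, each time computing $R^+$ in the current poset. *)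

theory Defs
  imports Main
begin

definition poset :: "'a set \<Rightarrow> ('a \<Rightarrow> 'a \<Rightarrow> bool) \<Rightarrow> bool" where
  "poset P le \<longleftrightarrow> (\<forall>x\<in>P. le x x)
     \<and> (\<forall>x\<in>P. \<forall>y\<in>P. le x y \<and> le y x \<longrightarrow> x = y)
     \<and> (\<forall>x\<in>P. \<forall>y\<in>P. \<forall>z\<in>P. le x y \<and> le y z \<longrightarrow> le x z)"

definition is_bot :: "'a set \<Rightarrow> ('a \<Rightarrow> 'a \<Rightarrow> bool) \<Rightarrow> 'a \<Rightarrow> bool" where
  "is_bot P le b \<longleftrightarrow> b \<in> P \<and> (\<forall>x\<in>P. le b x)"

definition is_top :: "'a set \<Rightarrow> ('a \<Rightarrow> 'a \<Rightarrow> bool) \<Rightarrow> 'a \<Rightarrow> bool" where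
  "is_top P le t \<longleftrightarrow> t \<in> P \<and> (\<forall>x\<in>P. le x t)"

definition bounded_poset :: "'a set \<Rightarrow> ('a \<Rightarrow> 'a \<Rightarrow> bool) \<Rightarrow> bool" where
  "bounded_poset P le \<longleftrightarrow> poset P le \<and> (\<exists>b. is_bot P le b) \<and> (\<exists>t. is_top P le t)"

definition is_chain :: "('a \<Rightarrow> 'a \<Rightarrow> bool) \<Rightarrow> 'a set \<Rightarrow> bool" where
  "is_chain le C \<longleftrightarrow> (\<forall>x\<in>C. \<forall>y\<in>C. le x y \<or> le y x)"

definition height :: "'a set \<Rightarrow> ('a \<Rightarrow> 'a \<Rightarrow> bool) \<Rightarrow> nat" where
  "height S le = Max {card C | C. C \<subseteq> S \<and> is_chain le C}"

definition covers :: "'a set \<Rightarrow> ('a \<Rightarrow> 'a \<Rightarrow> bool) \<Rightarrow> 'a \<Rightarrow> 'a \<Rightarrow> bool" where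
  "covers P le a b \<longleftrightarrow> a \<in> P \<and> b \<in> P \<and> le a b \<and> a \<noteq> b
     \<and> \<not> (\<exists>c\<in>P. le a c \<and> le c b \<and> c \<noteq> a \<and> c \<noteq> b)"

definition graded :: "'a set \<Rightarrow> ('a \<Rightarrow> 'a \<Rightarrow> bool) \<Rightarrow> bool" where
  "graded P le \<longleftrightarrow> bounded_poset P le \<and>
     (\<exists>\<rho> :: 'a \<Rightarrow> nat. (\<forall>x\<in>P. \<rho> x < height P le)
        \<and> (\<forall>t. is_top P le t \<longrightarrow> \<rho> t = 0)
        \<and> (\<forall>a b. covers P le a b \<longrightarrow> \<rho> a = \<rho> b + 1))"

definition interval_rank :: "'a set \<Rightarrow> ('a \<Rightarrow> 'a \<Rightarrow> bool) \<Rightarrow> 'a \<Rightarrow> nat \<times> nat" where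
  "interval_rank P le a =
     (height {b \<in> P. le a b} le - 1, height P le - height {b \<in> P. le b a} le)"

definition weak_le :: "nat \<times> nat \<Rightarrow> nat \<times> nat \<Rightarrow> bool" where
  "weak_le x y \<longleftrightarrow> fst x \<le> fst y \<and> snd x \<le> snd y"

definition R_All :: "'a set \<Rightarrow> ('a \<Rightarrow> 'a \<Rightarrow> bool) \<Rightarrow> ('a \<Rightarrow> 'a \<Rightarrow> bool)" where
  "R_All P le = (\<lambda>p q. p = q \<or>
     (p \<in> P \<and> q \<in> P \<and> weak_le (interval_rank P le q) (interval_rank P le p)
        \<and> interval_rank P le q \<noteq> interval_rank P le p))"

end

theory Submission
  imports Defs
begin

text \<open>Along \<open>x < y\<close> both the up-set of \<open>x\<close> and the down-set of \<open>y\<close> gain a chain element, so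
  both components of the interval rank drop strictly. Hence each \<open>R\<^sup>+\<^sub>A\<^sub>l\<^sub>l\<close> step extends the order,
  and the iterates, an increasing sequence of partial orders on the finite set \<open>P\<close>, become
  stationary. At a fixed point \<open>x < y\<close> holds exactly when the rank of \<open>y\<close> is strictly weakly
  below that of \<open>x\<close>. Then elements whose up-sets have equal height have equal ranks, since
  otherwise one would lie strictly below the other. If \<open>a \<lessdot> b\<close> but the up-height of \<open>a\<close>
  exceeded that of \<open>b\<close> by at least two, there would be \<open>c > a\<close> of up-height one more than \<open>b\<close>
  and \<open>c' \<ge> c\<close> of the same up-height as \<open>b\<close>; then \<open>c'\<close> shares the rank of \<open>b\<close> and lies
  strictly below \<open>c\<close>, so \<open>c < b\<close>, contradicting the cover. So the up-height minus one is a
  grading.\<close>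

lemma finite_chain_cards:
  assumes "finite S"
  shows "finite {card C | C. C \<subseteq> S \<and> is_chain le C}"
proof -
  have "{card C | C. C \<subseteq> S \<and> is_chain le C} \<subseteq> card ` Pow S" by auto
  then show ?thesis using assms by (meson finite_Pow_iff finite_imageI finite_subset)
qed

lemma card_chain_le_height:
  assumes "finite S" and "C \<subseteq> S" and "is_chain le C"
  shows "card C \<le> height S le"
  unfolding height_def using assms finite_chain_cards[OF assms(1)] by (intro Max_ge) auto

lemma ex_chain_card_eq_height:
  assumes "finite S"
  obtains C where "C \<subseteq> S" and "is_chain le C" and "card C = height S le"
proof -
  have "{} \<subseteq> S \<and> is_chain le {}" by (simp add: is_chain_def)
  then have "0 \<in> {card C | C. C \<subseteq> S \<and> is_chain le C}" by force
  then have "height S le \<in> {card C | C. C \<subseteq> S \<and> is_chain le C}"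
    unfolding height_def using finite_chain_cards[OF assms] by (intro Max_in) auto
  then show ?thesis using that by auto
qed

lemma height_mono:
  assumes "finite T" and "S \<subseteq> T"
  shows "height S le \<le> height T le"
proof -
  obtain C where "C \<subseteq> S" "is_chain le C" "card C = height S le"
    using ex_chain_card_eq_height[of S le] assms finite_subset by blast
  then show ?thesis using card_chain_le_height[of T C le] assms by auto
qed

lemma height_le_card:
  assumes "finite S"
  shows "height S le \<le> card S"
  using assms by (metis card_mono ex_chain_card_eq_height)

lemma one_le_height:
  assumes "finite S" and "x \<in> S" and "le x x"
  shows "1 \<le> height S le"
  using card_chain_le_height[of S "{x}" le] assms by (auto simp: is_chain_def)

lemma height_converse: "height S (\<lambda>x y. le y x) = height S le"
  unfolding height_def is_chain_def by (metis disj_commute)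

lemma poset_converse: "poset P le \<Longrightarrow> poset P (\<lambda>x y. le y x)"
  unfolding poset_def by blast

lemma one_le_up_height:
  assumes "poset P le" and "finite P" and "x \<in> P"
  shows "1 \<le> height {b\<in>P. le x b} le"
proof -
  have "le x x" using assms(1,3) unfolding poset_def by blast
  then show ?thesis using one_le_height[of "{b\<in>P. le x b}" x le] assms(2,3) by simp
qed

lemma chain_has_least:
  assumes "finite C" and "C \<noteq> {}" and "C \<subseteq> P" and "is_chain le C" and "poset P le"
  shows "\<exists>y\<in>C. \<forall>z\<in>C. le y z"
  using assms
proof (induction C rule: finite_ne_induct)
  case (singleton x)
  then show ?case by (auto simp: poset_def)
next
  case (insert a F)
  then obtain y where y: "y \<in> F" "\<forall>z\<in>F. le y z" by (auto simp: is_chain_def)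
  show ?case
  proof (cases "le a y")
    case True
    then have "\<forall>z\<in>insert a F. le a z"
      using y insert.prems unfolding poset_def by blast
    then show ?thesis by blast
  next
    case False
    then have "le y a" using insert.prems y unfolding is_chain_def by blast
    then show ?thesis using y by blast
  qed
qed

lemma up_height_strict_antimono:
  assumes "poset P le" and "finite P" and "x \<in> P" and "y \<in> P" and "le x y" and "x \<noteq> y"
  shows "height {b\<in>P. le y b} le < height {b\<in>P. le x b} le"
proof -
  obtain C where C: "C \<subseteq> {b\<in>P. le y b}" "is_chain le C" "card C = height {b\<in>P. le y b} le"
    using ex_chain_card_eq_height[of "{b\<in>P. le y b}" le] assms(2) by auto
  have x_below: "\<forall>c\<in>C. le x c"
    using C assms unfolding poset_def by blast
  have "x \<notin> C"
    using C assms unfolding poset_def by blast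
  have "insert x C \<subseteq> {b\<in>P. le x b}"
    using C x_below assms unfolding poset_def by blast
  moreover have "is_chain le (insert x C)"
    using C x_below assms unfolding is_chain_def poset_def by blast
  moreover have "finite C" using C(1) assms(2) by (simp add: finite_subset)
  ultimately show ?thesis
    using card_chain_le_height[of "{b\<in>P. le x b}" "insert x C" le] C \<open>x \<notin> C\<close> assms(2) by auto
qed

lemma down_height_strict_mono:
  assumes "poset P le" and "finite P" and "x \<in> P" and "y \<in> P" and "le x y" and "x \<noteq> y"
  shows "height {b\<in>P. le b x} le < height {b\<in>P. le b y} le"
  using up_height_strict_antimono[OF poset_converse[OF assms(1)] assms(2,4,3)] assms(5,6)
  by (simp add: height_converse[of _ le])

lemma interval_rank_strict_antimono:
  assumes "poset P le" and "finite P" and "x \<in> P" and "y \<in> P" and "le x y" and "x \<noteq> y"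
  shows "fst (interval_rank P le y) < fst (interval_rank P le x) \<and>
         snd (interval_rank P le y) < snd (interval_rank P le x)"
proof -
  have "1 \<le> height {b\<in>P. le y b} le" using one_le_up_height assms(1,2,4) .
  moreover have "height {b\<in>P. le b y} le \<le> height P le"
    using height_mono[of P] assms(2) by auto
  ultimately show ?thesis
    using up_height_strict_antimono[OF assms] down_height_strict_mono[OF assms]
    unfolding interval_rank_def by auto
qed

lemma ex_up_height_pred:
  assumes "poset P le" and "finite P" and "x \<in> P" and "2 \<le> height {b\<in>P. le x b} le"
  shows "\<exists>y\<in>P. le x y \<and> height {b\<in>P. le y b} le = height {b\<in>P. le x b} le - 1"
proof -
  obtain C where C: "C \<subseteq> {b\<in>P. le x b}" "is_chain le C" "card C = height {b\<in>P. le x b} le"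
    using ex_chain_card_eq_height[of "{b\<in>P. le x b}" le] assms(2) by auto
  have "finite C" using C(1) assms(2) by (simp add: finite_subset)
  let ?C = "C - {x}"
  have card_C': "height {b\<in>P. le x b} le - 1 \<le> card ?C"
    using C \<open>finite C\<close> by (simp add: card_Diff_singleton_if)
  then have "card ?C \<noteq> 0" using assms(4) by linarith
  then have "?C \<noteq> {}" by force
  moreover have "?C \<subseteq> P" and chain_C': "is_chain le ?C"
    using C unfolding is_chain_def by blast+
  ultimately obtain y where y: "y \<in> ?C" "\<forall>z\<in>?C. le y z"
    using chain_has_least[of ?C P le] \<open>finite C\<close> assms(1) by blast
  have "y \<in> P" "le x y" "y \<noteq> x" using y C by auto
  have "?C \<subseteq> {b\<in>P. le y b}" using y \<open>?C \<subseteq> P\<close> by auto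
  then have "card ?C \<le> height {b\<in>P. le y b} le"
    using card_chain_le_height[of "{b\<in>P. le y b}" ?C le] chain_C' assms(2) by simp
  moreover have "height {b\<in>P. le y b} le < height {b\<in>P. le x b} le"
    using up_height_strict_antimono[OF assms(1-3) \<open>y \<in> P\<close> \<open>le x y\<close>] \<open>y \<noteq> x\<close> by auto
  ultimately show ?thesis using card_C' \<open>y \<in> P\<close> \<open>le x y\<close> by (intro bexI[of _ y]) auto
qed

lemma ex_up_height_eq:
  assumes "poset P le" and "finite P" and "x \<in> P"
    and "1 \<le> j" and "j \<le> height {b\<in>P. le x b} le"
  shows "\<exists>y\<in>P. le x y \<and> height {b\<in>P. le y b} le = j"
  using assms(3,5)
proof (induction "height {b\<in>P. le x b} le - j" arbitrary: x)
  case 0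
  then have "le x x" using assms(1) unfolding poset_def by blast
  then show ?case using 0 by auto
next
  case (Suc k)
  then have "2 \<le> height {b\<in>P. le x b} le" using assms(4) by linarith
  then obtain y where y: "y \<in> P" "le x y" "height {b\<in>P. le y b} le = height {b\<in>P. le x b} le - 1"
    using ex_up_height_pred[OF assms(1,2) Suc.prems(1)] by blast
  obtain z where "z \<in> P" "le y z" "height {b\<in>P. le z b} le = j"
    using Suc.hyps(1)[of y] Suc.hyps(2) y by force
  moreover have "le x z" using y \<open>z \<in> P\<close> \<open>le y z\<close> Suc.prems assms(1) unfolding poset_def by blast
  ultimately show ?case by blast
qed

lemma poset_R_All: "poset P (R_All P le)"
  unfolding poset_def R_All_def weak_le_def by (auto simp: prod_eq_iff)

lemma le_imp_R_All:
  assumes "poset P le" and "finite P" and "x \<in> P" and "y \<in> P" and "le x y"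
  shows "R_All P le x y"
  using interval_rank_strict_antimono[OF assms] assms(3,4)
  unfolding R_All_def weak_le_def by (auto simp: prod_eq_iff)

lemma bounded_poset_R_All:
  assumes "bounded_poset P le" and "finite P"
  shows "bounded_poset P (R_All P le)"
proof -
  have "poset P le" using assms(1) unfolding bounded_poset_def by blast
  have extends: "R_All P le x y" if "x \<in> P" "y \<in> P" "le x y" for x y
    using le_imp_R_All[OF \<open>poset P le\<close> assms(2) that] .
  have "is_bot P (R_All P le) b" if "is_bot P le b" for b
    using that extends unfolding is_bot_def by blast
  moreover have "is_top P (R_All P le) t" if "is_top P le t" for t
    using that extends unfolding is_top_def by blast
  ultimately show ?thesis using assms(1) poset_R_All unfolding bounded_poset_def by blast
qed

lemma bounded_poset_funpow_R_All:
  assumes "bounded_poset P le" and "finite P"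
  shows "bounded_poset P ((R_All P ^^ m) le)"
proof (induction m)
  case (Suc m)
  then show ?case using bounded_poset_R_All assms(2) by simp
qed (use assms(1) in simp)

lemma ex_stationary_if_incseq_in_finite:
  fixes S :: "nat \<Rightarrow> 'b set"
  assumes "\<And>m. S m \<subseteq> S (Suc m)" and "\<And>m. S m \<subseteq> A" and "finite A"
  shows "\<exists>m. S (Suc m) = S m"
proof (rule ccontr)
  assume "\<nexists>m. S (Suc m) = S m"
  then have "inj S"
    using assms(1) by (metis lift_Suc_mono_less strict_monoI psubsetI strict_mono_imp_inj_on)
  moreover have "finite (range S)"
    using assms(2,3) by (meson Pow_iff finite_Pow_iff finite_subset image_subsetI)
  ultimately show False by (simp add: finite_image_iff)
qed

context
  fixes P :: "'a set" and le :: "'a \<Rightarrow> 'a \<Rightarrow> bool"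
  assumes bounded: "bounded_poset P le" and finite: "finite P"
    and fixed: "\<forall>x\<in>P. \<forall>y\<in>P. R_All P le x y = le x y"
begin

lemma poset_le: "poset P le"
  using bounded unfolding bounded_poset_def by blast

lemma le_iff_interval_rank_less:
  assumes "x \<in> P" and "y \<in> P" and "x \<noteq> y"
  shows "le x y \<longleftrightarrow>
    weak_le (interval_rank P le y) (interval_rank P le x) \<and> interval_rank P le y \<noteq> interval_rank P le x"
  using fixed assms unfolding R_All_def by auto

lemma interval_rank_eq_if_up_height_eq:
  assumes "x \<in> P" and "y \<in> P" and "height {b\<in>P. le x b} le = height {b\<in>P. le y b} le"
  shows "interval_rank P le x = interval_rank P le y"
proof (rule ccontr)
  assume ne: "interval_rank P le x \<noteq> interval_rank P le y"
  have fst_eq: "fst (interval_rank P le x) = fst (interval_rank P le y)"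
    using assms(3) unfolding interval_rank_def by simp
  then consider "snd (interval_rank P le x) < snd (interval_rank P le y)"
    | "snd (interval_rank P le y) < snd (interval_rank P le x)"
    using ne by (metis linorder_neqE_nat prod_eq_iff)
  then show False
  proof cases
    case 1
    then have "le y x" using le_iff_interval_rank_less[of y x] assms ne fst_eq
      unfolding weak_le_def by auto
    then show False
      using interval_rank_strict_antimono[OF poset_le finite, of y x] assms ne fst_eq by auto
  next
    case 2
    then have "le x y" using le_iff_interval_rank_less[of x y] assms ne fst_eq
      unfolding weak_le_def by auto
    then show False
      using interval_rank_strict_antimono[OF poset_le finite, of x y] assms ne fst_eq by auto
  qed
qed

lemma up_height_cover:
  assumes "covers P le a b"
  shows "height {x\<in>P. le a x} le = height {x\<in>P. le b x} le + 1"
proof (rule ccontr)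
  let ?U = "\<lambda>x. height {b\<in>P. le x b} le"
  assume ne: "?U a \<noteq> ?U b + 1"
  have ab: "a \<in> P" "b \<in> P" "le a b" "a \<noteq> b" using assms unfolding covers_def by auto
  then have gap: "?U b + 2 \<le> ?U a"
    using up_height_strict_antimono[OF poset_le finite] ne by fastforce
  obtain c where c: "c \<in> P" "le a c" "?U c = ?U b + 1"
    using ex_up_height_eq[OF poset_le finite \<open>a \<in> P\<close>, of "?U b + 1"] gap by auto
  have "1 \<le> ?U b" using one_le_up_height poset_le finite \<open>b \<in> P\<close> .
  then obtain c' where c': "c' \<in> P" "le c c'" "?U c' = ?U b"
    using ex_up_height_eq[OF poset_le finite \<open>c \<in> P\<close>, of "?U b"] c(3) by auto
  have "c \<noteq> a" "c \<noteq> b" "c \<noteq> c'" using c c' gap by auto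
  \<comment> \<open>\<open>c'\<close> has the rank of \<open>b\<close>, which is therefore strictly below that of \<open>c\<close>\<close>
  have "interval_rank P le c' = interval_rank P le b"
    using interval_rank_eq_if_up_height_eq c' \<open>b \<in> P\<close> by blast
  then have "le c b"
    using interval_rank_strict_antimono[OF poset_le finite c(1) c'(1,2) \<open>c \<noteq> c'\<close>]
      le_iff_interval_rank_less[OF c(1) \<open>b \<in> P\<close> \<open>c \<noteq> b\<close>] unfolding weak_le_def by auto
  then show False using assms c \<open>c \<noteq> a\<close> \<open>c \<noteq> b\<close> unfolding covers_def by blast
qed

lemma graded_if_R_All_fixed: "graded P le"
proof -
  let ?U = "\<lambda>x. height {b\<in>P. le x b} le"
  have U_pos: "1 \<le> ?U x" if "x \<in> P" for x
    using one_le_up_height poset_le finite that .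
  have "?U x - 1 < height P le" if "x \<in> P" for x
    using height_mono[of P "{b\<in>P. le x b}" le] finite U_pos[OF that] by fastforce
  moreover have "?U t - 1 = 0" if "is_top P le t" for t
  proof -
    have "{b\<in>P. le t b} \<subseteq> {t}" using that poset_le unfolding is_top_def poset_def by blast
    then show ?thesis using height_mono[of "{t}" "{b\<in>P. le t b}" le] height_le_card[of "{t}" le]
      by auto
  qed
  moreover have "?U a - 1 = (?U b - 1) + 1" if "covers P le a b" for a b
    using up_height_cover[OF that] U_pos[of b] that unfolding covers_def by simp
  ultimately show ?thesis
    using bounded unfolding graded_def by (intro conjI exI[of _ "\<lambda>x. ?U x - 1"]) auto
qed

end

theorem lemma1:
  fixes P :: "'a set" and le :: "'a \<Rightarrow> 'a \<Rightarrow> bool"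
  assumes "finite P" and "bounded_poset P le" and "card P \<ge> 2"
  shows "\<exists>m::nat. graded P ((R_All P ^^ m) le)"
proof -
  let ?S = "\<lambda>m. {(x, y). x \<in> P \<and> y \<in> P \<and> (R_All P ^^ m) le x y}"
  have bounded: "bounded_poset P ((R_All P ^^ m) le)" for m
    using bounded_poset_funpow_R_All[OF assms(2,1)] .
  have "?S m \<subseteq> ?S (Suc m)" for m
    using le_imp_R_All[OF _ assms(1)] bounded[of m] unfolding bounded_poset_def by auto
  then obtain m where "?S (Suc m) = ?S m"
    using ex_stationary_if_incseq_in_finite[of ?S "P \<times> P"] assms(1) by blast
  then have "\<forall>x\<in>P. \<forall>y\<in>P. R_All P ((R_All P ^^ m) le) x y = (R_All P ^^ m) le x y"
    by (auto simp: set_eq_iff)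
  then show ?thesis using graded_if_R_All_fixed bounded assms(1) by blast
qed

end
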